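(* Let $v\equiv 3\pmod 6$. If a $(v,3,2)$-BIBD $(X,\mathcal{A})$ has a strong nesting $\phi:\mathcal{A}\to Y$ with $X\subseteq Y$ and $|Y|=w$, then $w\ge (3v+1)/2$.
   Context: A $(v,k,\lambda)$-BIBD is a pair $(X,\mathcal{A})$ where $X$ is a set of $v$ points and $\mathcal{A}$ is a multiset of $k$-subsets of $X$ (blocks) such that every pair of distinct points lies in exactly $\lambda$ blocks. Given a $(v,k,\lambda)$-BIBD $(X,\mathcal{A})$ and a set $Y\supseteq X$ with $|Y|=w$, a map $\phi:\mathcal{A}\to Y$ is a strong nesting if (1) $\phi(A)\notin A$ for every block $A\in\mathcal{A}$, and (2) the multiset of pairs $\{\{x,\phi(A)\}: A\in\mathcal{A},\ x\in A\}$ (one pair for each block $A$, counted with multiplicity in $\mathcal{A}$, and each $x\in A$) consists of distinct pairs. *)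

theory Defs
  imports Complex_Main
begin

text \<open>The multiset of blocks is represented as an
indexed family B over a finite index set I: each index is one block occurrence, so the
multiset of blocks is the image of B over I (repeated blocks are distinct indices).\<close>
definition bibd :: "'a set \<Rightarrow> 'i set \<Rightarrow> ('i \<Rightarrow> 'a set) \<Rightarrow> nat \<Rightarrow> nat \<Rightarrow> nat \<Rightarrow> bool" where
  "bibd X I B v k lam \<longleftrightarrow>
     finite X \<and> card X = v \<and> finite I \<and>
     (\<forall>i\<in>I. B i \<subseteq> X \<and> card (B i) = k) \<and>
     (\<forall>x\<in>X. \<forall>y\<in>X. x \<noteq> y \<longrightarrow> card {i\<in>I. x \<in> B i \<and> y \<in> B i} = lam)"

definition strong_nesting :: "'i set \<Rightarrow> ('i \<Rightarrow> 'a set) \<Rightarrow> 'a set \<Rightarrow> ('i \<Rightarrow> 'a) \<Rightarrow> bool" where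
  "strong_nesting I B Y phi \<longleftrightarrow>
     (\<forall>i\<in>I. phi i \<in> Y \<and> phi i \<notin> B i) \<and>
     inj_on (\<lambda>(i, x). {x, phi i}) (SIGMA i:I. B i)"

end

theory Submission
  imports Defs
begin

(* Call a pair (A, y) with y in A a flag. For a point x of X the strong nesting yields distinct
   pairs {x, z} with z in Y - {x}: a pair {x, phi A} for each of the r = v - 1 blocks A through x,
   and three pairs {x, y} for each of the n(x) blocks A with phi A = x. Hence 3 n(x) <= w - v =: d.
   Now split the v (v - 1) flags according to where phi A lies: at most 3 v floor(d/3) flags have
   phi A in X, and (A, y) |-> (y, phi A) embeds the others into X x (Y - X). This gives
   v - 1 <= 3 floor(d/3) + d, which for v = 3 (mod 6) forces v + 1 <= 2 d, i.e. 2 w >= 3 v + 1. *)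

lemma sum_card_eq_sum_card_containing:
  assumes "finite I" "finite X" "\<forall>i\<in>I. B i \<subseteq> X"
  shows "(\<Sum>i\<in>I. card (B i)) = (\<Sum>x\<in>X. card {i\<in>I. x \<in> B i})"
proof -
  have "(\<Sum>i\<in>I. card (B i)) = (\<Sum>i\<in>I. \<Sum>x\<in>{x. x \<in> X \<and> x \<in> B i}. 1)"
    using assms(3) by (intro sum.cong) (auto intro: arg_cong[where f = card])
  also have "\<dots> = (\<Sum>x\<in>X. \<Sum>i\<in>{i. i \<in> I \<and> x \<in> B i}. 1)"
    using assms(1,2) by (rule sum.swap_restrict)
  finally show ?thesis
    by simp
qed

lemma bibd_replication_number:
  assumes "bibd X I B v k lam" "x \<in> X"
  shows "card {i\<in>I. x \<in> B i} * (k - 1) = lam * (v - 1)"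
proof -
  from assms(1) have fin: "finite X" "finite I" and card_X: "card X = v"
    and blocks: "\<forall>i\<in>I. B i \<subseteq> X \<and> card (B i) = k"
    and pairs: "\<forall>y\<in>X. x \<noteq> y \<longrightarrow> card {i\<in>I. x \<in> B i \<and> y \<in> B i} = lam"
    using assms(2) unfolding bibd_def by auto
  let ?Ix = "{i\<in>I. x \<in> B i}"
  have "card ?Ix * (k - 1) = (\<Sum>i\<in>?Ix. card (B i - {x}))"
    using blocks by simp
  also have "\<dots> = (\<Sum>y\<in>X - {x}. card {i\<in>?Ix. y \<in> B i - {x}})"
    using fin blocks by (intro sum_card_eq_sum_card_containing) auto
  also have "\<dots> = (\<Sum>y\<in>X - {x}. lam)"
    using pairs by (intro sum.cong) (auto intro: arg_cong[where f = card])
  also have "\<dots> = lam * (v - 1)"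
    using fin card_X assms(2) by simp
  finally show ?thesis .
qed

lemma strong_nesting_inj_flag_nest:
  assumes "strong_nesting I B Y phi"
  shows "inj_on (\<lambda>(i, y). (y, phi i)) (SIGMA i:I. B i)"
proof (rule inj_on_imageI2)
  show "inj_on ((\<lambda>(a, b). {a, b}) \<circ> (\<lambda>(i, y). (y, phi i))) (SIGMA i:I. B i)"
    using assms unfolding strong_nesting_def by (simp add: comp_def case_prod_beta')
qed

lemma strong_nesting_card_pairs_at_point:
  assumes nest: "strong_nesting I B Y phi" and "finite I" "finite Y"
    and blocks: "\<forall>i\<in>I. B i \<subseteq> Y" and "x \<in> Y"
  shows "(\<Sum>i\<in>{i\<in>I. phi i = x}. card (B i)) + card {i\<in>I. x \<in> B i} \<le> card Y - 1"
proof -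
  from nest have nested: "\<forall>i\<in>I. phi i \<in> Y \<and> phi i \<notin> B i"
    and inj: "inj_on (\<lambda>(i, y). {y, phi i}) (SIGMA i:I. B i)"
    unfolding strong_nesting_def by auto
  have fin_blocks: "\<forall>i\<in>I. finite (B i)"
    using blocks \<open>finite Y\<close> finite_subset by blast
  define nested_at where "nested_at = (SIGMA i:{i\<in>I. phi i = x}. B i)"
  define containing where "containing = {i\<in>I. x \<in> B i} \<times> {x}"
  have flags: "nested_at \<union> containing \<subseteq> (SIGMA i:I. B i)"
    unfolding nested_at_def containing_def by auto
  have disjoint: "nested_at \<inter> containing = {}"
    unfolding nested_at_def containing_def using nested by auto
  have "(\<lambda>(i, y). {y, phi i}) ` (nested_at \<union> containing) \<subseteq> (\<lambda>z. {x, z}) ` (Y - {x})"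
    unfolding nested_at_def containing_def using nested blocks by fastforce
  then have "card (nested_at \<union> containing) \<le> card ((\<lambda>z. {x, z}) ` (Y - {x}))"
    using inj_on_subset[OF inj flags] \<open>finite Y\<close> by (intro card_inj_on_le) auto
  also have "\<dots> \<le> card Y - 1"
    using card_image_le[of "Y - {x}" "\<lambda>z. {x, z}"] \<open>finite Y\<close> \<open>x \<in> Y\<close> by simp
  finally show ?thesis
    using disjoint flags finite_subset[OF flags] \<open>finite I\<close> fin_blocks
    by (simp add: card_Un_disjoint nested_at_def containing_def card_cartesian_product)
qed

lemma strong_nesting_card_flags_nested_outside:
  assumes "strong_nesting I B Y phi" "finite X" "finite Y" "\<forall>i\<in>I. B i \<subseteq> X"
  shows "card (SIGMA i:{i\<in>I. phi i \<notin> X}. B i) \<le> card X * card (Y - X)"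
proof -
  have "card (SIGMA i:{i\<in>I. phi i \<notin> X}. B i) \<le> card (X \<times> (Y - X))"
  proof (rule card_inj_on_le)
    show "inj_on (\<lambda>(i, y). (y, phi i)) (SIGMA i:{i\<in>I. phi i \<notin> X}. B i)"
      using strong_nesting_inj_flag_nest[OF assms(1)] by (rule inj_on_subset) auto
    show "(\<lambda>(i, y). (y, phi i)) ` (SIGMA i:{i\<in>I. phi i \<notin> X}. B i) \<subseteq> X \<times> (Y - X)"
      using assms(1,4) unfolding strong_nesting_def by auto
  qed (use assms(2,3) in simp)
  then show ?thesis
    by (simp add: card_cartesian_product)
qed

lemma strong_nesting_replication_bound:
  assumes nest: "strong_nesting I B Y phi"
    and fin: "finite X" "finite I" "finite Y" and "X \<subseteq> Y" "X \<noteq> {}"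
    and blocks: "\<forall>i\<in>I. B i \<subseteq> X \<and> card (B i) = k"
    and replication: "\<forall>x\<in>X. card {i\<in>I. x \<in> B i} = r"
  shows "r \<le> k * ((card Y - 1 - r) div k) + card (Y - X)"
proof -
  define m where "m = (card Y - 1 - r) div k"
  have card_Sigma: "card (SIGMA i:J. B i) = k * card J" if "J \<subseteq> I" for J
  proof -
    have "\<forall>i\<in>J. finite (B i)"
      using that blocks fin(1) by (auto intro: finite_subset)
    then have "card (SIGMA i:J. B i) = (\<Sum>i\<in>J. card (B i))"
      using finite_subset[OF that fin(2)] by simp
    also have "\<dots> = (\<Sum>i\<in>J. k)"
      using that blocks by (intro sum.cong) auto
    finally show ?thesis
      by simp
  qed
  have nested_at: "k * card {i\<in>I. phi i = x} \<le> k * m" if "x \<in> X" for x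
  proof -
    let ?n = "card {i\<in>I. phi i = x}"
    have "(\<Sum>i\<in>{i\<in>I. phi i = x}. card (B i)) + r \<le> card Y - 1"
      using strong_nesting_card_pairs_at_point[OF nest fin(2,3)] blocks replication that
        \<open>X \<subseteq> Y\<close> by fastforce
    moreover have "(\<Sum>i\<in>{i\<in>I. phi i = x}. card (B i)) = k * ?n"
      using blocks by simp
    ultimately have "k * ?n \<le> card Y - 1 - r"
      by simp
    then have "(k * ?n) div k \<le> m"
      unfolding m_def by (rule div_le_mono)
    then show ?thesis
      by (cases "k = 0") simp_all
  qed
  let ?inside = "{i\<in>I. phi i \<in> X}" and ?outside = "{i\<in>I. phi i \<notin> X}"
  have "k * card ?inside = (\<Sum>x\<in>X. k * card {i\<in>I. phi i = x})"
  proof -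
    have "?inside = (\<Union>x\<in>X. {i\<in>I. phi i = x})"
      by auto
    also have "card \<dots> = (\<Sum>x\<in>X. card {i\<in>I. phi i = x})"
      by (rule card_UN_disjoint) (use fin in auto)
    finally show ?thesis
      by (simp add: sum_distrib_left)
  qed
  also have "\<dots> \<le> card X * (k * m)"
    using sum_mono[of X _ "\<lambda>_. k * m", OF nested_at] by simp
  finally have inside: "k * card ?inside \<le> card X * (k * m)" .
  have outside: "k * card ?outside \<le> card X * card (Y - X)"
    using strong_nesting_card_flags_nested_outside[OF nest fin(1,3)] blocks card_Sigma[of ?outside]
    by auto
  have "card X * r = k * card I"
    using sum_card_eq_sum_card_containing[of I X B] fin blocks replication by (simp add: mult.commute)
  also have "\<dots> = k * card ?inside + k * card ?outside"
  proof -
    have "card I = card (?inside \<union> ?outside)"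
      by (rule arg_cong[where f = card]) auto
    also have "\<dots> = card ?inside + card ?outside"
      using fin by (intro card_Un_disjoint) auto
    finally show ?thesis
      by (simp add: add_mult_distrib2)
  qed
  also have "\<dots> \<le> card X * (k * m + card (Y - X))"
    using add_le_mono[OF inside outside] by (simp only: add_mult_distrib2)
  finally show ?thesis
    using \<open>finite X\<close> \<open>X \<noteq> {}\<close> unfolding m_def by (simp add: card_gt_0_iff)
qed

theorem lemma4p2:
  fixes X Y :: "'a set" and I :: "'i set" and B :: "'i \<Rightarrow> 'a set"
    and phi :: "'i \<Rightarrow> 'a" and v w :: nat
  assumes "v mod 6 = 3"
    and "bibd X I B v 3 2"
    and "X \<subseteq> Y" and "finite Y" and "card Y = w"
    and "strong_nesting I B Y phi"
  shows "real w \<ge> (3 * real v + 1) / 2"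
proof -
  from assms(2) have fin: "finite X" "finite I" and card_X: "card X = v"
    and blocks: "\<forall>i\<in>I. B i \<subseteq> X \<and> card (B i) = 3"
    unfolding bibd_def by auto
  have "0 < v"
    using assms(1) by auto
  then have "X \<noteq> {}"
    using card_X by auto
  have replication: "\<forall>x\<in>X. card {i\<in>I. x \<in> B i} = v - 1"
    using bibd_replication_number[OF assms(2)] by simp
  define d where "d = w - v"
  have "v \<le> w"
    using card_mono[OF assms(4,3)] card_X assms(5) by simp
  have "card (Y - X) = d"
    using card_Diff_subset[OF fin(1) assms(3)] card_X assms(5) d_def by simp
  then have "v - 1 \<le> 3 * (d div 3) + d"
    using strong_nesting_replication_bound[OF assms(6) fin assms(4,3) \<open>X \<noteq> {}\<close> blocks replication]
      \<open>0 < v\<close> assms(5) d_def by simp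
  then have "v + 1 \<le> 2 * d"
    using assms(1) by presburger
  then have "real (3 * v + 1) \<le> real (2 * w)"
    using \<open>v \<le> w\<close> d_def by simp
  then show ?thesis
    by simp
qed

end
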